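(* Let $K$ be a field of characteristic $0$, let $E$ be the infinite-dimensional unitary Grassmann algebra over $K$ with even part $E_0$, let $A=\begin{pmatrix} E_0 & E\\ 0 & E\end{pmatrix}$, and let $F_n(A)=K\langle x_1,\dots,x_n\rangle/(K\langle x_1,\dots,x_n\rangle\cap T(A))$. Let $n\geq 2$ be even and $m\geq n+2$. Then the polynomial \[f_{m,n}^{(2)}=[x_2,x_1,\dots,x_1][x_1,x_2][x_3,x_4]\cdots[x_{n-1},x_n],\] where the first factor is the left-normed commutator of length $m-n$ consisting of $x_2$ followed by $m-n-1$ copies of $x_1$, is not a polynomial identity of $F_n(A)$.
   Context: All algebras are associative and unitary over $K$; $T(A)$ is the ideal of polynomial identities of $A$. $E$ is generated by anticommuting $e_1,e_2,\dots$ and $E_0$ is the span of basis products of even length. Commutators: $[a,b]=ab-ba$, $[a_1,\dots,a_k]=[[a_1,\dots,a_{k-1}],a_k]$. The polynomial has total degree $m$. *)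

theory Defs
  imports Main
begin

text \<open>An element of E is a finite K-linear combination of basis monomials e_S,
  S a finite set of generator indices (e_S = e_{i1} ... e_{ik}, i1 < ... < ik).
  We represent it by its coefficient function.\<close>

type_synonym 'k gr = "nat set \<Rightarrow> 'k"

definition grass :: "'k::field gr set" where
  "grass = {a. finite {S. a S \<noteq> 0} \<and> (\<forall>S. a S \<noteq> 0 \<longrightarrow> finite S)}"

definition grass0 :: "'k::field gr set" where
  "grass0 = {a \<in> grass. \<forall>S. a S \<noteq> 0 \<longrightarrow> even (card S)}"

text \<open>sign of e_S e_T = sign * e_{S \<union> T} for disjoint finite S, T\<close>
definition gsgn :: "nat set \<Rightarrow> nat set \<Rightarrow> 'k::field" where
  "gsgn S T = (-1) ^ card {(i, j). i \<in> S \<and> j \<in> T \<and> j < i}"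

definition gzero :: "'k::field gr" where "gzero = (\<lambda>S. 0)"
definition gone :: "'k::field gr" where "gone = (\<lambda>S. if S = {} then 1 else 0)"
definition gadd :: "'k::field gr \<Rightarrow> 'k gr \<Rightarrow> 'k gr" where
  "gadd a b = (\<lambda>S. a S + b S)"
definition gmul :: "'k::field gr \<Rightarrow> 'k gr \<Rightarrow> 'k gr" where
  "gmul a b = (\<lambda>U. if finite U then (\<Sum>S\<in>Pow U. gsgn S (U - S) * a S * b (U - S)) else 0)"

text \<open>(a, b, c) represents the upper triangular matrix with entries a (1,1), b (1,2), c (2,2).\<close>
type_synonym 'k ut = "'k gr \<times> 'k gr \<times> 'k gr"

definition Acarrier :: "'k::field ut set" where
  "Acarrier = {(a, b, c). a \<in> grass0 \<and> b \<in> grass \<and> c \<in> grass}"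

fun utmul :: "'k::field ut \<Rightarrow> 'k ut \<Rightarrow> 'k ut" where
  "utmul (a, b, c) (a', b', c') = (gmul a a', gadd (gmul a b') (gmul b c'), gmul c c')"

definition utone :: "'k::field ut" where "utone = (gone, gzero, gone)"
definition utzero :: "'k::field ut" where "utzero = (gzero, gzero, gzero)"

definition utprod :: "'k::field ut list \<Rightarrow> 'k ut" where
  "utprod xs = foldr utmul xs utone"

section \<open>Free associative algebra K<X>, X = {x_1, x_2, ...} (x_i is letter i)\<close>

type_synonym 'k npoly = "nat list \<Rightarrow> 'k"

definition freealg :: "'k::field npoly set" where
  "freealg = {p. finite {w. p w \<noteq> 0}}"

definition freealg_n :: "nat \<Rightarrow> 'k::field npoly set" where
  "freealg_n n = {p \<in> freealg. \<forall>w. p w \<noteq> 0 \<longrightarrow> set w \<subseteq> {1..n}}"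

definition pvar :: "nat \<Rightarrow> 'k::field npoly" where
  "pvar i = (\<lambda>w. if w = [i] then 1 else 0)"
definition pone :: "'k::field npoly" where
  "pone = (\<lambda>w. if w = [] then 1 else 0)"
definition pmul :: "'k::field npoly \<Rightarrow> 'k npoly \<Rightarrow> 'k npoly" where
  "pmul p q = (\<lambda>w. \<Sum>i\<le>length w. p (take i w) * q (drop i w))"
definition pcomm :: "'k::field npoly \<Rightarrow> 'k npoly \<Rightarrow> 'k npoly" where
  "pcomm p q = (\<lambda>w. pmul p q w - pmul q p w)"

definition lcomm :: "'k::field npoly \<Rightarrow> 'k npoly list \<Rightarrow> 'k npoly" where
  "lcomm a as = foldl pcomm a as"

definition pprod :: "'k::field npoly list \<Rightarrow> 'k npoly" where
  "pprod ps = foldr pmul ps pone"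

definition psubst :: "(nat \<Rightarrow> 'k::field npoly) \<Rightarrow> 'k npoly \<Rightarrow> 'k npoly" where
  "psubst \<sigma> f = (\<lambda>w. \<Sum>u\<in>{u. f u \<noteq> 0}. f u * pprod (map \<sigma> u) w)"

definition evalA :: "(nat \<Rightarrow> 'k::field ut) \<Rightarrow> 'k npoly \<Rightarrow> 'k ut" where
  "evalA \<phi> p =
    ((\<lambda>S. \<Sum>w\<in>{w. p w \<noteq> 0}. p w * fst (utprod (map \<phi> w)) S),
     (\<lambda>S. \<Sum>w\<in>{w. p w \<noteq> 0}. p w * fst (snd (utprod (map \<phi> w))) S),
     (\<lambda>S. \<Sum>w\<in>{w. p w \<noteq> 0}. p w * snd (snd (utprod (map \<phi> w))) S))"

definition TA :: "'k::field npoly set" where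
  "TA = {p \<in> freealg. \<forall>\<phi>. (\<forall>i. \<phi> i \<in> Acarrier) \<longrightarrow> evalA \<phi> p = utzero}"

text \<open>f is a polynomial identity of F_n(A) = K<x_1..x_n> / (K<x_1..x_n> \<inter> T(A)):
  for all elements g_i + (K<x_1..x_n> \<inter> T(A)) of F_n(A), f(g_1, g_2, ...) lies in T(A),
  i.e. is zero in F_n(A).\<close>
definition PI_of_Fn :: "nat \<Rightarrow> 'k::field npoly \<Rightarrow> bool" where
  "PI_of_Fn n f \<longleftrightarrow> (\<forall>\<sigma>. (\<forall>i. \<sigma> i \<in> freealg_n n) \<longrightarrow> psubst \<sigma> f \<in> TA)"

definition f2 :: "nat \<Rightarrow> nat \<Rightarrow> 'k::field npoly" where
  "f2 m n = pmul (lcomm (pvar 2) (replicate (m - n - 1) (pvar 1)))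
     (pmul (pcomm (pvar 1) (pvar 2))
        (pprod (map (\<lambda>j. pcomm (pvar (2 * j + 3)) (pvar (2 * j + 4))) [0..<(n - 2) div 2])))"

end

theory Submission
  imports Defs
begin

text \<open>Since f lies in K<x_1, ..., x_n>, substituting x_i := x_i shows that f is an identity
  of F_n(A) only if it is an identity of A. Evaluate f in A at x_1 := diag(1, e_1),
  x_2 := e_{12} + e_2 e_{22} and x_i := e_i e_{22} for i > 2. Then u = [x_2, x_1, ..., x_1] has
  (1,1)-entry 0 and the constant term of its (1,2)-entry is \<plusminus>1, while
  v = [x_1, x_2][x_3, x_4] ... [x_{n-1}, x_n] has (2,2)-entry 2^{n/2} e_1 ... e_n. Hence the
  (1,2)-entry of uv is u_{12} v_{22}, whose coefficient of e_1 ... e_n is \<plusminus>2^{n/2}, which is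
  nonzero in characteristic 0.\<close>

subsection \<open>The Grassmann algebra\<close>

definition inversions :: "nat set \<Rightarrow> nat set \<Rightarrow> (nat \<times> nat) set" where
  "inversions S T = {(i, j). i \<in> S \<and> j \<in> T \<and> j < i}"

lemma gsgn_eq_inversions: "gsgn S T = (-1) ^ card (inversions S T)"
  by (simp add: gsgn_def inversions_def)

lemma finite_inversions: "finite S \<Longrightarrow> finite T \<Longrightarrow> finite (inversions S T)"
  by (rule finite_subset[of _ "S \<times> T"]) (auto simp: inversions_def)

lemma card_inversions_Un_left:
  assumes "finite S" "finite R" "finite T" "S \<inter> R = {}"
  shows "card (inversions (S \<union> R) T) = card (inversions S T) + card (inversions R T)"
proof -
  have "inversions (S \<union> R) T = inversions S T \<union> inversions R T"
    by (auto simp: inversions_def)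
  moreover have "inversions S T \<inter> inversions R T = {}"
    using assms(4) by (auto simp: inversions_def)
  ultimately show ?thesis
    using assms by (simp add: card_Un_disjoint finite_inversions)
qed

lemma card_inversions_Un_right:
  assumes "finite S" "finite R" "finite T" "R \<inter> T = {}"
  shows "card (inversions S (R \<union> T)) = card (inversions S R) + card (inversions S T)"
proof -
  have "inversions S (R \<union> T) = inversions S R \<union> inversions S T"
    by (auto simp: inversions_def)
  moreover have "inversions S R \<inter> inversions S T = {}"
    using assms(4) by (auto simp: inversions_def)
  ultimately show ?thesis
    using assms by (simp add: card_Un_disjoint finite_inversions)
qed

lemma gsgn_Un_mult:
  assumes "finite U" "S \<subseteq> U" "R \<subseteq> U - S"
  shows "gsgn (S \<union> R) (U - S - R) * gsgn S R = (gsgn S (U - S) * gsgn R (U - S - R) :: 'k::field)"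
proof -
  define V where "V = U - S - R"
  have fin: "finite S" "finite R" "finite V"
    using assms by (auto simp: V_def intro: finite_subset)
  have "U - S = R \<union> V"
    using assms by (auto simp: V_def)
  moreover have "card (inversions (S \<union> R) V) = card (inversions S V) + card (inversions R V)"
    using assms fin by (intro card_inversions_Un_left) auto
  moreover have "card (inversions S (R \<union> V)) = card (inversions S R) + card (inversions S V)"
    using fin by (intro card_inversions_Un_right) (auto simp: V_def)
  ultimately show ?thesis
    unfolding V_def[symmetric] gsgn_eq_inversions by (simp add: power_add mult_ac)
qed

lemma gsgn_empty_left [simp]: "gsgn {} T = 1"
  by (simp add: gsgn_def)

lemma gsgn_empty_right [simp]: "gsgn S {} = 1"
  by (simp add: gsgn_def)

lemma gsgn_eq_1_if_less:
  assumes "\<And>i j. i \<in> S \<Longrightarrow> j \<in> T \<Longrightarrow> i < j"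
  shows "gsgn S T = 1"
proof -
  have "inversions S T = {}"
    using assms by (auto simp: inversions_def dest: less_asym)
  thus ?thesis
    by (simp add: gsgn_eq_inversions)
qed

lemma gsgn_singleton_swap: "i < j \<Longrightarrow> gsgn {j} {i} = -1"
proof -
  assume "i < j"
  hence "inversions {j} {i} = {(j, i)}"
    by (auto simp: inversions_def)
  thus ?thesis
    by (simp add: gsgn_eq_inversions)
qed

lemma sum_Pow_Pow_reindex:
  assumes "finite U"
  shows "(\<Sum>T\<in>Pow U. \<Sum>S\<in>Pow T. F T S) = (\<Sum>S\<in>Pow U. \<Sum>R\<in>Pow (U - S). F (S \<union> R) S)"
proof -
  have fin: "\<And>T. T \<in> Pow U \<Longrightarrow> finite T"
    using assms finite_subset by blast
  have "(\<Sum>T\<in>Pow U. \<Sum>S\<in>Pow T. F T S) = (\<Sum>(T, S)\<in>Sigma (Pow U) Pow. F T S)"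
    using assms fin by (intro sum.Sigma) auto
  also have "\<dots> = (\<Sum>(S, R)\<in>Sigma (Pow U) (\<lambda>S. Pow (U - S)). F (S \<union> R) S)"
    by (rule sum.reindex_bij_witness[where i = "\<lambda>(S, R). (S \<union> R, S)" and j = "\<lambda>(T, S). (S, T - S)"])
      (auto simp: Un_absorb1)
  also have "\<dots> = (\<Sum>S\<in>Pow U. \<Sum>R\<in>Pow (U - S). F (S \<union> R) S)"
    using assms fin by (intro sum.Sigma[symmetric]) auto
  finally show ?thesis .
qed

lemma gmul_assoc: "gmul (gmul a b) c = gmul a (gmul b c)"
proof
  fix U :: "nat set"
  show "gmul (gmul a b) c U = gmul a (gmul b c) U"
  proof (cases "finite U")
    case False
    thus ?thesis by (simp add: gmul_def)
  next
    case True
    have "gmul (gmul a b) c U =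
        (\<Sum>T\<in>Pow U. gsgn T (U - T) * (\<Sum>S\<in>Pow T. gsgn S (T - S) * a S * b (T - S)) * c (U - T))"
      using True by (auto simp: gmul_def intro!: sum.cong dest: finite_subset)
    also have "\<dots> = (\<Sum>T\<in>Pow U. \<Sum>S\<in>Pow T.
        gsgn T (U - T) * gsgn S (T - S) * (a S * b (T - S) * c (U - T)))"
      by (simp add: sum_distrib_left sum_distrib_right mult_ac)
    also have "\<dots> = (\<Sum>S\<in>Pow U. \<Sum>R\<in>Pow (U - S).
        gsgn S (U - S) * gsgn R (U - S - R) * (a S * b R * c (U - S - R)))"
      unfolding sum_Pow_Pow_reindex[OF True]
    proof (intro sum.cong refl)
      fix S R assume "S \<in> Pow U" "R \<in> Pow (U - S)"
      hence "S \<union> R - S = R" "U - (S \<union> R) = U - S - R"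
        and "gsgn (S \<union> R) (U - S - R) * gsgn S R = gsgn S (U - S) * (gsgn R (U - S - R) :: 'a)"
        using True by (auto intro: gsgn_Un_mult)
      thus "gsgn (S \<union> R) (U - (S \<union> R)) * gsgn S (S \<union> R - S) * (a S * b (S \<union> R - S) * c (U - (S \<union> R)))
          = gsgn S (U - S) * gsgn R (U - S - R) * (a S * b R * c (U - S - R))"
        by (simp only:)
    qed
    also have "\<dots> = gmul a (gmul b c) U"
      using True by (auto simp: gmul_def sum_distrib_left mult_ac intro!: sum.cong)
    finally show ?thesis .
  qed
qed

lemma gmul_gadd_left: "gmul (gadd a b) c = gadd (gmul a c) (gmul b c)"
  by (rule ext) (simp add: gmul_def gadd_def algebra_simps sum.distrib)

lemma gmul_gadd_right: "gmul a (gadd b c) = gadd (gmul a b) (gmul a c)"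
  by (rule ext) (simp add: gmul_def gadd_def algebra_simps sum.distrib)

lemma gadd_assoc: "gadd (gadd a b) c = gadd a (gadd b c)"
  by (rule ext) (simp add: gadd_def algebra_simps)

lemma gmul_gzero_left [simp]: "gmul gzero b = gzero"
  by (rule ext) (simp add: gmul_def gzero_def)

lemma gmul_gzero_right [simp]: "gmul a gzero = gzero"
  by (rule ext) (simp add: gmul_def gzero_def)

lemma gadd_gzero_left [simp]: "gadd gzero a = a"
  by (rule ext) (simp add: gadd_def gzero_def)

lemma gadd_gzero_right [simp]: "gadd a gzero = a"
  by (rule ext) (simp add: gadd_def gzero_def)

text \<open>A product always vanishes at infinite index sets, so gone is a unit only for
  coefficient functions with the same property.\<close>

definition gfinitary :: "'k::field gr \<Rightarrow> bool" where
  "gfinitary a \<longleftrightarrow> (\<forall>U. infinite U \<longrightarrow> a U = 0)"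

lemma gfinitary_gmul: "gfinitary (gmul a b)"
  by (simp add: gfinitary_def gmul_def)

lemma gfinitary_gadd: "gfinitary a \<Longrightarrow> gfinitary b \<Longrightarrow> gfinitary (gadd a b)"
  by (simp add: gfinitary_def gadd_def)

lemma gfinitary_gone: "gfinitary gone"
  by (simp add: gfinitary_def gone_def)

lemma gfinitary_gzero: "gfinitary gzero"
  by (simp add: gfinitary_def gzero_def)

lemma gmul_gone_left:
  assumes "gfinitary a"
  shows "gmul gone a = a"
proof
  fix U :: "nat set"
  show "gmul gone a U = a U"
  proof (cases "finite U")
    case True
    have "(\<Sum>S\<in>Pow U. gsgn S (U - S) * gone S * a (U - S)) = (\<Sum>S\<in>Pow U. if S = {} then a U else 0)"
      by (rule sum.cong) (auto simp: gone_def)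
    thus ?thesis
      using True by (simp add: gmul_def)
  qed (use assms in \<open>simp add: gmul_def gfinitary_def\<close>)
qed

lemma gmul_gone_right:
  assumes "gfinitary a"
  shows "gmul a gone = a"
proof
  fix U :: "nat set"
  show "gmul a gone U = a U"
  proof (cases "finite U")
    case True
    have "(\<Sum>S\<in>Pow U. gsgn S (U - S) * a S * gone (U - S)) = (\<Sum>S\<in>Pow U. if S = U then a U else 0)"
      by (rule sum.cong) (auto simp: gone_def)
    thus ?thesis
      using True by (simp add: gmul_def)
  qed (use assms in \<open>simp add: gmul_def gfinitary_def\<close>)
qed

definition gmonom :: "'k::field \<Rightarrow> nat set \<Rightarrow> 'k gr" where
  "gmonom c T = (\<lambda>S. if S = T then c else 0)"

lemma gfinitary_gmonom: "finite T \<Longrightarrow> gfinitary (gmonom c T)"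
  by (auto simp: gfinitary_def gmonom_def)

lemma gmonom_diff: "(\<lambda>S. gmonom c T S - gmonom d T S) = gmonom (c - d) T"
  by (rule ext) (simp add: gmonom_def)

lemma gmul_gmonom:
  assumes "finite T" "finite T'" "T \<inter> T' = {}"
  shows "gmul (gmonom c T) (gmonom d T') = gmonom (c * d * gsgn T T') (T \<union> T')"
proof
  fix U :: "nat set"
  show "gmul (gmonom c T) (gmonom d T') U = gmonom (c * d * gsgn T T') (T \<union> T') U"
  proof (cases "finite U")
    case False
    hence "U \<noteq> T \<union> T'"
      using assms by auto
    thus ?thesis
      using False by (simp add: gmul_def gmonom_def)
  next
    case True
    have "gmul (gmonom c T) (gmonom d T') U =
        (\<Sum>S\<in>Pow U. gsgn S (U - S) * gmonom c T S * gmonom d T' (U - S))"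
      using True by (simp add: gmul_def)
    also have "\<dots> = (\<Sum>S\<in>Pow U. if S = T then gsgn T (U - T) * c * gmonom d T' (U - T) else 0)"
      by (rule sum.cong) (auto simp: gmonom_def)
    also have "\<dots> = (if T \<subseteq> U then gsgn T (U - T) * c * gmonom d T' (U - T) else 0)"
      using True by simp
    also have "\<dots> = gmonom (c * d * gsgn T T') (T \<union> T') U"
    proof (cases "U = T \<union> T'")
      case True
      hence "T \<subseteq> U" "U - T = T'"
        using assms by auto
      thus ?thesis
        using True by (simp add: gmonom_def)
    next
      case False
      hence "\<not> (T \<subseteq> U \<and> U - T = T')"
        by auto
      thus ?thesis
        using False by (auto simp: gmonom_def)
    qed
    finally show ?thesis .
  qed
qed

lemma gmul_gmonom_apply_self:
  assumes "finite T"
  shows "gmul a (gmonom d T) T = a {} * d"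
proof -
  have "(\<Sum>S\<in>Pow T. gsgn S (T - S) * a S * gmonom d T (T - S)) = (\<Sum>S\<in>Pow T. if S = {} then a {} * d else 0)"
    by (rule sum.cong) (auto simp: gmonom_def)
  thus ?thesis
    using assms by (simp add: gmul_def)
qed

lemma utmul_eq: "utmul x y =
    (gmul (fst x) (fst y),
     gadd (gmul (fst x) (fst (snd y))) (gmul (fst (snd x)) (snd (snd y))),
     gmul (snd (snd x)) (snd (snd y)))"
  by (cases x; cases y) auto

lemma utmul_assoc: "utmul (utmul x y) z = utmul x (utmul y z)"
  by (simp add: utmul_eq gmul_assoc gmul_gadd_left gmul_gadd_right gadd_assoc)

definition ut_finitary :: "'k::field ut \<Rightarrow> bool" where
  "ut_finitary x \<longleftrightarrow> gfinitary (fst x) \<and> gfinitary (fst (snd x)) \<and> gfinitary (snd (snd x))"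

lemma utmul_utone_left: "ut_finitary y \<Longrightarrow> utmul utone y = y"
  by (cases y) (simp add: utmul_eq utone_def ut_finitary_def gmul_gone_left)

lemma utmul_utone_right: "ut_finitary y \<Longrightarrow> utmul y utone = y"
  by (cases y) (simp add: utmul_eq utone_def ut_finitary_def gmul_gone_right)

lemma utprod_Nil [simp]: "utprod [] = utone"
  by (simp add: utprod_def)

lemma utprod_Cons [simp]: "utprod (x # xs) = utmul x (utprod xs)"
  by (simp add: utprod_def)

lemma ut_finitary_utprod: "ut_finitary (utprod xs)"
  by (cases xs) (auto simp: ut_finitary_def utone_def utmul_eq gfinitary_gone gfinitary_gzero
      gfinitary_gmul gfinitary_gadd)

lemma utprod_append: "utprod (xs @ ys) = utmul (utprod xs) (utprod ys)"
  by (induction xs) (simp_all add: utmul_utone_left ut_finitary_utprod utmul_assoc)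

fun utsub :: "'k::field ut \<Rightarrow> 'k ut \<Rightarrow> 'k ut" where
  "utsub (a, b, c) (a', b', c') = ((\<lambda>S. a S - a' S), (\<lambda>S. b S - b' S), (\<lambda>S. c S - c' S))"

lemma utsub_eq: "utsub x y =
    ((\<lambda>S. fst x S - fst y S),
     (\<lambda>S. fst (snd x) S - fst (snd y) S),
     (\<lambda>S. snd (snd x) S - snd (snd y) S))"
  by (cases x; cases y) auto

definition psupp :: "'k::field npoly \<Rightarrow> nat list set" where
  "psupp p = {w. p w \<noteq> 0}"

lemma finite_psupp: "p \<in> freealg \<Longrightarrow> finite (psupp p)"
  by (simp add: freealg_def psupp_def)

lemma freealg_n_subset_freealg: "freealg_n n \<subseteq> freealg"
  by (auto simp: freealg_n_def)

lemma pmul_nonzero_split: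
  assumes "pmul p q w \<noteq> 0"
  obtains i where "i \<le> length w" "p (take i w) \<noteq> 0" "q (drop i w) \<noteq> 0"
  using assms unfolding pmul_def by (metis (no_types, lifting) atMost_iff mult_zero_left mult_zero_right sum.neutral)

lemma psupp_pmul: "psupp (pmul p q) \<subseteq> (\<lambda>(u, v). u @ v) ` (psupp p \<times> psupp q)"
proof
  fix w assume "w \<in> psupp (pmul p q)"
  then obtain i where "p (take i w) \<noteq> 0" "q (drop i w) \<noteq> 0"
    unfolding psupp_def by (auto elim: pmul_nonzero_split)
  hence "(take i w, drop i w) \<in> psupp p \<times> psupp q"
    by (simp add: psupp_def)
  thus "w \<in> (\<lambda>(u, v). u @ v) ` (psupp p \<times> psupp q)"
    by (rule rev_image_eqI) simp
qed

lemma pmul_freealg: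
  assumes "p \<in> freealg" "q \<in> freealg"
  shows "pmul p q \<in> freealg"
proof -
  have "finite ((\<lambda>(u, v). u @ v) ` (psupp p \<times> psupp q))"
    using assms by (simp add: finite_psupp)
  from finite_subset[OF psupp_pmul this] show ?thesis
    by (simp add: freealg_def psupp_def)
qed

lemma pmul_freealg_n:
  assumes "p \<in> freealg_n n" "q \<in> freealg_n n"
  shows "pmul p q \<in> freealg_n n"
proof -
  have "set w \<subseteq> {1..n}" if "w \<in> psupp (pmul p q)" for w
    using psupp_pmul that assms by (fastforce simp: freealg_n_def psupp_def)
  thus ?thesis
    using assms pmul_freealg by (auto simp: freealg_n_def psupp_def)
qed

lemma diff_freealg_n:
  assumes "p \<in> freealg_n n" "q \<in> freealg_n n"
  shows "(\<lambda>w. p w - q w) \<in> freealg_n n"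
proof -
  have "{w. p w - q w \<noteq> 0} \<subseteq> {w. p w \<noteq> 0} \<union> {w. q w \<noteq> 0}"
    by auto
  moreover have "finite ({w. p w \<noteq> 0} \<union> {w. q w \<noteq> 0})"
    using assms by (simp add: freealg_n_def freealg_def)
  ultimately show ?thesis
    using assms finite_subset by (fastforce simp: freealg_n_def freealg_def)
qed

lemma pcomm_freealg_n: "p \<in> freealg_n n \<Longrightarrow> q \<in> freealg_n n \<Longrightarrow> pcomm p q \<in> freealg_n n"
  unfolding pcomm_def by (intro diff_freealg_n pmul_freealg_n)

lemma psupp_pvar: "psupp (pvar i) = {[i]}"
  by (auto simp: psupp_def pvar_def)

lemma pvar_freealg: "pvar i \<in> freealg"
  by (simp add: freealg_def pvar_def)

lemma pvar_freealg_n: "1 \<le> i \<Longrightarrow> i \<le> n \<Longrightarrow> pvar i \<in> freealg_n n"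
  using pvar_freealg[of i] by (simp add: freealg_n_def pvar_def)

lemma psupp_pone: "psupp pone = {[]}"
  by (auto simp: psupp_def pone_def)

lemma pone_freealg_n: "pone \<in> freealg_n n"
  by (simp add: freealg_n_def freealg_def pone_def)

lemma pprod_Nil [simp]: "pprod [] = pone"
  by (simp add: pprod_def)

lemma pprod_Cons [simp]: "pprod (p # ps) = pmul p (pprod ps)"
  by (simp add: pprod_def)

lemma pprod_freealg_n: "(\<And>p. p \<in> set ps \<Longrightarrow> p \<in> freealg_n n) \<Longrightarrow> pprod ps \<in> freealg_n n"
  by (induction ps) (simp_all add: pone_freealg_n pmul_freealg_n)

lemma lcomm_freealg_n:
  "p \<in> freealg_n n \<Longrightarrow> (\<And>q. q \<in> set qs \<Longrightarrow> q \<in> freealg_n n) \<Longrightarrow> lcomm p qs \<in> freealg_n n"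
  unfolding lcomm_def by (induction qs arbitrary: p) (simp_all add: pcomm_freealg_n)

definition pword :: "nat list \<Rightarrow> 'k::field npoly" where
  "pword u = (\<lambda>w. if w = u then 1 else 0)"

lemma pmul_pword: "pmul (pword u) (pword v) = pword (u @ v)"
proof
  fix w
  have "pmul (pword u) (pword v) w = (\<Sum>i\<le>length w. if i = length u \<and> w = u @ v then 1 else 0)"
    unfolding pmul_def pword_def
    by (intro sum.cong refl) (auto simp: append_eq_conv_conj)
  also have "\<dots> = pword (u @ v) w"
    by (auto simp: pword_def)
  finally show "pmul (pword u) (pword v) w = pword (u @ v) w" .
qed

lemma pprod_map_pvar: "pprod (map pvar u) = pword u"
proof (induction u)
  case Nil
  show ?case by (simp add: pone_def pword_def)
next
  case (Cons i u)
  have "pvar i = (pword [i] :: 'a npoly)"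
    by (simp add: pvar_def pword_def)
  thus ?case
    using Cons.IH pmul_pword[of "[i]" u] by simp
qed

lemma psubst_eq_self:
  assumes "f \<in> freealg_n n" "\<And>i. 1 \<le> i \<Longrightarrow> i \<le> n \<Longrightarrow> \<sigma> i = pvar i"
  shows "psubst \<sigma> f = f"
proof
  fix w
  have "psubst \<sigma> f w = (\<Sum>u\<in>{u. f u \<noteq> 0}. if u = w then f u else 0)"
    unfolding psubst_def
  proof (intro sum.cong refl)
    fix u assume "u \<in> {u. f u \<noteq> 0}"
    hence "set u \<subseteq> {1..n}"
      using assms(1) by (auto simp: freealg_n_def)
    hence "map \<sigma> u = map pvar u"
      using assms(2) by (intro map_cong) auto
    thus "f u * pprod (map \<sigma> u) w = (if u = w then f u else 0)"
      by (simp only: pprod_map_pvar) (simp add: pword_def)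
  qed
  also have "\<dots> = f w"
    using assms(1) by (simp add: freealg_n_def freealg_def sum.delta')
  finally show "psubst \<sigma> f w = f w" .
qed

subsection \<open>Evaluation is a homomorphism\<close>

definition glincomb :: "'k::field npoly \<Rightarrow> (nat list \<Rightarrow> 'k gr) \<Rightarrow> 'k gr" where
  "glincomb p h = (\<lambda>S. \<Sum>w\<in>psupp p. p w * h w S)"

lemma evalA_eq_glincomb: "evalA \<phi> p =
    (glincomb p (\<lambda>w. fst (utprod (map \<phi> w))),
     glincomb p (\<lambda>w. fst (snd (utprod (map \<phi> w)))),
     glincomb p (\<lambda>w. snd (snd (utprod (map \<phi> w)))))"
  by (simp add: evalA_def glincomb_def psupp_def)

lemma glincomb_superset:
  assumes "finite W" "psupp p \<subseteq> W"
  shows "glincomb p h = (\<lambda>S. \<Sum>w\<in>W. p w * h w S)"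
  using assms by (auto simp: glincomb_def psupp_def intro!: ext sum.mono_neutral_left)

lemma glincomb_diff:
  assumes "p \<in> freealg" "q \<in> freealg"
  shows "glincomb (\<lambda>w. p w - q w) h = (\<lambda>S. glincomb p h S - glincomb q h S)"
proof -
  let ?W = "psupp p \<union> psupp q"
  have "finite ?W"
    using assms by (simp add: finite_psupp)
  moreover have "psupp (\<lambda>w. p w - q w) \<subseteq> ?W"
    by (auto simp: psupp_def)
  ultimately show ?thesis
    by (simp add: glincomb_superset[of ?W] left_diff_distrib sum_subtractf)
qed

lemma splits_eq_image: "{(u, v). u @ v = w} = (\<lambda>i. (take i w, drop i w)) ` {..length w}"
proof (intro equalityI subsetI)
  fix x assume "x \<in> {(u, v). u @ v = w}"
  then obtain u v where "x = (u, v)" "w = u @ v"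
    by auto
  thus "x \<in> (\<lambda>i. (take i w, drop i w)) ` {..length w}"
    by (intro image_eqI[of _ _ "length u"]) auto
qed auto

lemma finite_splits: "finite {(u, v). u @ v = w}"
  by (simp add: splits_eq_image)

lemma pmul_eq_sum_splits: "pmul p q w = (\<Sum>(u, v)\<in>{(u, v). u @ v = w}. p u * q v)"
proof -
  have "inj_on (\<lambda>i. (take i w, drop i w)) {..length w}"
    by (rule inj_onI) (metis atMost_iff length_take min.absorb2 prod.inject)
  thus ?thesis
    unfolding splits_eq_image pmul_def by (simp add: sum.reindex)
qed

lemma glincomb_pmul:
  assumes "p \<in> freealg" "q \<in> freealg"
  shows "glincomb (pmul p q) h = (\<lambda>S. \<Sum>u\<in>psupp p. \<Sum>v\<in>psupp q. p u * q v * h (u @ v) S)"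
proof
  fix S
  let ?PQ = "psupp p \<times> psupp q" and ?cat = "\<lambda>(u, v). u @ v"
  have fin: "finite ?PQ"
    using assms by (simp add: finite_psupp)
  have splits: "pmul p q w = (\<Sum>(u, v)\<in>{x \<in> ?PQ. ?cat x = w}. p u * q v)" for w
    unfolding pmul_eq_sum_splits
    by (rule sum.mono_neutral_right) (auto simp: finite_splits psupp_def)
  have "glincomb (pmul p q) h S = (\<Sum>w\<in>?cat ` ?PQ. pmul p q w * h w S)"
    using fin by (simp add: glincomb_superset[OF _ psupp_pmul])
  also have "\<dots> = (\<Sum>w\<in>?cat ` ?PQ. \<Sum>(u, v)\<in>{x \<in> ?PQ. ?cat x = w}. p u * q v * h (u @ v) S)"
    unfolding splits sum_distrib_right
    by (intro sum.cong refl) (auto simp: split_beta)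
  also have "\<dots> = (\<Sum>(u, v)\<in>?PQ. p u * q v * h (u @ v) S)"
    using fin by (rule sum.image_gen[symmetric])
  also have "\<dots> = (\<Sum>u\<in>psupp p. \<Sum>v\<in>psupp q. p u * q v * h (u @ v) S)"
    by (rule sum.cartesian_product[symmetric])
  finally show "glincomb (pmul p q) h S = (\<Sum>u\<in>psupp p. \<Sum>v\<in>psupp q. p u * q v * h (u @ v) S)" .
qed

lemma gmul_glincomb:
  "gmul (glincomb p f) (glincomb q g) =
    (\<lambda>S. \<Sum>u\<in>psupp p. \<Sum>v\<in>psupp q. p u * q v * gmul (f u) (g v) S)"
proof
  fix U :: "nat set"
  show "gmul (glincomb p f) (glincomb q g) U =
      (\<Sum>u\<in>psupp p. \<Sum>v\<in>psupp q. p u * q v * gmul (f u) (g v) U)"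
  proof (cases "finite U")
    case True
    have "gmul (glincomb p f) (glincomb q g) U = (\<Sum>T\<in>Pow U. \<Sum>u\<in>psupp p. \<Sum>v\<in>psupp q.
        p u * q v * (gsgn T (U - T) * f u T * g v (U - T)))"
      using True by (simp add: gmul_def glincomb_def sum_distrib_left sum_distrib_right mult_ac)
    also have "\<dots> = (\<Sum>u\<in>psupp p. \<Sum>v\<in>psupp q. \<Sum>T\<in>Pow U.
        p u * q v * (gsgn T (U - T) * f u T * g v (U - T)))"
      by (subst sum.swap) (simp add: sum.swap[of _ "Pow U"])
    also have "\<dots> = (\<Sum>u\<in>psupp p. \<Sum>v\<in>psupp q. p u * q v * gmul (f u) (g v) U)"
      using True by (simp add: gmul_def sum_distrib_left)
    finally show ?thesis .
  qed (simp add: gmul_def)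
qed

lemma evalA_pmul:
  assumes "p \<in> freealg" "q \<in> freealg"
  shows "evalA \<phi> (pmul p q) = utmul (evalA \<phi> p) (evalA \<phi> q)"
  unfolding evalA_eq_glincomb utmul_eq
  by (simp add: assms glincomb_pmul gmul_glincomb utprod_append utmul_eq gadd_def
      distrib_left sum.distrib)

lemma evalA_diff:
  assumes "p \<in> freealg" "q \<in> freealg"
  shows "evalA \<phi> (\<lambda>w. p w - q w) = utsub (evalA \<phi> p) (evalA \<phi> q)"
  unfolding evalA_eq_glincomb by (simp add: assms glincomb_diff utsub_eq)

lemma evalA_pcomm:
  assumes "p \<in> freealg" "q \<in> freealg"
  shows "evalA \<phi> (pcomm p q) =
    utsub (utmul (evalA \<phi> p) (evalA \<phi> q)) (utmul (evalA \<phi> q) (evalA \<phi> p))"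
  unfolding pcomm_def by (simp add: assms pmul_freealg evalA_diff evalA_pmul)

lemma evalA_pvar: "ut_finitary (\<phi> i) \<Longrightarrow> evalA \<phi> (pvar i) = \<phi> i"
  unfolding evalA_eq_glincomb glincomb_def psupp_pvar by (simp add: pvar_def utmul_utone_right)

lemma evalA_pone: "evalA \<phi> pone = utone"
  unfolding evalA_eq_glincomb glincomb_def psupp_pone by (simp add: pone_def)

subsection \<open>The evaluation witnessing that f is not an identity\<close>

definition wit :: "nat \<Rightarrow> 'k::field ut" where
  "wit i = (if i = 1 then gone else gzero, if i = 2 then gone else gzero, gmonom 1 {i})"

lemma ut_finitary_wit: "ut_finitary (wit i)"
  by (simp add: ut_finitary_def wit_def gfinitary_gone gfinitary_gzero gfinitary_gmonom)

lemma wit_in_Acarrier: "(wit i :: 'k::field ut) \<in> Acarrier"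
proof -
  have "{S. gone S \<noteq> (0::'k)} \<subseteq> {{}}" "{S. gmonom 1 {i} S \<noteq> (0::'k)} \<subseteq> {{i}}"
    by (auto simp: gone_def gmonom_def)
  hence "gone \<in> (grass :: 'k gr set)" "gzero \<in> (grass :: 'k gr set)" "gmonom 1 {i} \<in> (grass :: 'k gr set)"
    by (auto simp: grass_def gone_def gzero_def gmonom_def intro: finite_subset)
  moreover from this(1,2) have "gone \<in> (grass0 :: 'k gr set)" "gzero \<in> (grass0 :: 'k gr set)"
    by (auto simp: grass0_def gone_def gzero_def)
  ultimately show ?thesis
    by (simp add: Acarrier_def wit_def)
qed

lemma evalA_wit_pvar: "evalA wit (pvar i) = wit i"
  by (rule evalA_pvar[OF ut_finitary_wit])

lemma evalA_wit_pcomm_pvar_Suc: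
  "snd (snd (evalA wit (pcomm (pvar i) (pvar (Suc i))))) = (gmonom 2 {i, Suc i} :: 'k::field gr)"
proof -
  have "gsgn {i} {Suc i} = (1 :: 'k)"
    by (rule gsgn_eq_1_if_less) auto
  hence "gmul (gmonom 1 {i}) (gmonom 1 {Suc i}) = (gmonom 1 {i, Suc i} :: 'k gr)"
    by (subst gmul_gmonom) (auto simp: insert_commute)
  moreover have "gmul (gmonom 1 {Suc i}) (gmonom 1 {i}) = (gmonom (-1) {i, Suc i} :: 'k gr)"
    by (subst gmul_gmonom) (auto simp: gsgn_singleton_swap insert_commute)
  ultimately show ?thesis
    by (simp add: evalA_pcomm pvar_freealg evalA_wit_pvar utsub_eq utmul_eq)
      (simp add: wit_def gmonom_diff)
qed

lemma lcomm_replicate_Suc: "lcomm p (replicate (Suc k) q) = pcomm (lcomm p (replicate k q)) q"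
proof -
  have "replicate (Suc k) q = replicate k q @ [q]"
    by (simp add: replicate_append_same)
  thus ?thesis
    by (simp add: lcomm_def)
qed

lemma lcomm_x2_x1_freealg: "lcomm (pvar 2) (replicate k (pvar 1)) \<in> freealg"
  using lcomm_freealg_n[of "pvar 2" 2 "replicate k (pvar 1)"] freealg_n_subset_freealg
  by (auto simp: pvar_freealg_n)

text \<open>Multiplying by x_1 from the left fixes the (1,2)-entry, and from the right multiplies it
  by e_1; so each commutator with x_1 negates its constant term.\<close>

lemma evalA_wit_lcomm_x2_x1:
  "fst (evalA wit (lcomm (pvar 2) (replicate k (pvar 1)) :: 'k::field npoly)) = gzero \<and>
   fst (snd (evalA wit (lcomm (pvar 2) (replicate k (pvar 1))))) {} = ((-1) ^ k :: 'k)"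
proof (induction k)
  case 0
  show ?case
    by (simp add: lcomm_def evalA_wit_pvar) (simp add: wit_def gone_def)
next
  case (Suc k)
  let ?Y = "lcomm (pvar 2) (replicate k (pvar 1)) :: 'k npoly"
  obtain a b c where Y: "evalA wit ?Y = (a, b, c)"
    by (cases "evalA wit ?Y")
  have a: "a = gzero" and b: "b {} = (-1) ^ k"
    using Suc.IH unfolding Y by simp_all
  have "evalA wit (lcomm (pvar 2) (replicate (Suc k) (pvar 1))) =
      utsub (utmul (a, b, c) (wit 1)) (utmul (wit 1) (a, b, c))"
    unfolding lcomm_replicate_Suc evalA_pcomm[OF lcomm_x2_x1_freealg pvar_freealg] evalA_wit_pvar Y ..
  moreover have "gmul b (gmonom 1 {1}) {} = 0" "gmul gone b {} = b {}"
    by (simp_all add: gmul_def gmonom_def gone_def)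
  ultimately show ?case
    by (simp only:) (simp add: utsub_eq utmul_eq wit_def a b gadd_def, simp add: gzero_def)
qed

definition comm_pair :: "nat \<Rightarrow> 'k::field npoly" where
  "comm_pair j = pcomm (pvar (2 * j + 1)) (pvar (2 * j + 2))"

lemma comm_pair_freealg_n: "2 * j + 2 \<le> n \<Longrightarrow> comm_pair j \<in> freealg_n n"
  by (simp add: comm_pair_def pcomm_freealg_n pvar_freealg_n)

lemma pprod_comm_pairs_freealg_n:
  "2 * (a + d) \<le> n \<Longrightarrow> pprod (map comm_pair [a..<a + d]) \<in> freealg_n n"
  by (rule pprod_freealg_n) (auto intro: comm_pair_freealg_n)

lemma evalA_wit_pprod_comm_pairs:
  "snd (snd (evalA wit (pprod (map comm_pair [a..<a + d])))) = (gmonom (2 ^ d) {2 * a + 1..2 * a + 2 * d} :: 'k::field gr)"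
proof (induction d arbitrary: a)
  case 0
  show ?case
    by (simp add: evalA_pone utone_def gone_def gmonom_def)
next
  case (Suc d)
  let ?tail = "pprod (map comm_pair [Suc a..<Suc a + d]) :: 'k npoly"
  have head: "comm_pair a \<in> freealg"
    using comm_pair_freealg_n[of a "2 * a + 2"] freealg_n_subset_freealg by blast
  have tail: "?tail \<in> freealg"
    using pprod_comm_pairs_freealg_n[of "Suc a" d "2 * (Suc a + d)"] freealg_n_subset_freealg by blast
  have pair: "comm_pair a = pcomm (pvar (2 * a + 1)) (pvar (Suc (2 * a + 1)))"
    by (simp add: comm_pair_def)
  have upt: "[a..<a + Suc d] = a # [Suc a..<Suc a + d]"
    by (simp add: upt_conv_Cons)
  have "snd (snd (evalA wit (pprod (map comm_pair [a..<a + Suc d])))) =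
      gmul (snd (snd (evalA wit (comm_pair a)))) (snd (snd (evalA wit ?tail)))"
    unfolding upt list.map pprod_Cons evalA_pmul[OF head tail] utmul_eq by (simp only: snd_conv)
  also have "\<dots> = gmul (gmonom 2 {2 * a + 1, Suc (2 * a + 1)}) (gmonom (2 ^ d) {2 * Suc a + 1..2 * Suc a + 2 * d})"
    unfolding Suc.IH pair evalA_wit_pcomm_pvar_Suc ..
  also have "\<dots> = gmonom (2 ^ Suc d) {2 * a + 1..2 * a + 2 * Suc d}"
  proof -
    have "gsgn {2 * a + 1, Suc (2 * a + 1)} {2 * Suc a + 1..2 * Suc a + 2 * d} = (1 :: 'k)"
      by (rule gsgn_eq_1_if_less) auto
    moreover have "{2 * a + 1, Suc (2 * a + 1)} \<union> {2 * Suc a + 1..2 * Suc a + 2 * d} =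
        {2 * a + 1..2 * a + 2 * Suc d}"
      by auto
    ultimately show ?thesis
      by (subst gmul_gmonom) auto
  qed
  finally show ?case .
qed

lemma f2_eq:
  assumes "2 \<le> n"
  shows "f2 m n = pmul (lcomm (pvar 2) (replicate (m - n - 1) (pvar 1))) (pprod (map comm_pair [0..<n div 2]))"
proof -
  have "n div 2 = Suc ((n - 2) div 2)"
    using assms by presburger
  hence pairs: "map comm_pair [0..<n div 2] = comm_pair 0 # map (comm_pair \<circ> Suc) [0..<(n - 2) div 2]"
    by (simp add: upt_conv_Cons map_Suc_upt flip: map_map)
  have first: "comm_pair 0 = pcomm (pvar 1) (pvar 2)"
    by (simp add: comm_pair_def numeral_2_eq_2)
  have rest: "comm_pair \<circ> Suc = (\<lambda>j. pcomm (pvar (2 * j + 3)) (pvar (2 * j + 4)))"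
  proof
    fix j
    have "2 * Suc j + 1 = 2 * j + 3" "2 * Suc j + 2 = 2 * j + 4"
      by simp_all
    thus "(comm_pair \<circ> Suc) j = pcomm (pvar (2 * j + 3)) (pvar (2 * j + 4))"
      by (simp only: comm_pair_def o_apply)
  qed
  show ?thesis
    unfolding f2_def pairs pprod_Cons first rest ..
qed

lemma f2_freealg_n: "2 \<le> n \<Longrightarrow> f2 m n \<in> freealg_n n"
  unfolding f2_eq
  by (intro pmul_freealg_n lcomm_freealg_n pprod_comm_pairs_freealg_n[of 0, simplified])
    (auto simp: pvar_freealg_n)

lemma evalA_wit_f2:
  assumes "even n" "2 \<le> n"
  shows "fst (snd (evalA wit (f2 m n))) {1..n} = ((-1) ^ (m - n - 1) * 2 ^ (n div 2) :: 'k::field)"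
proof -
  let ?F = "lcomm (pvar 2) (replicate (m - n - 1) (pvar 1)) :: 'k npoly"
  let ?G = "pprod (map comm_pair [0..<n div 2]) :: 'k npoly"
  have G: "?G \<in> freealg"
    using pprod_comm_pairs_freealg_n[of 0 "n div 2" n] freealg_n_subset_freealg by auto
  have "snd (snd (evalA wit ?G)) = gmonom (2 ^ (n div 2)) {1..n}"
    using evalA_wit_pprod_comm_pairs[of 0 "n div 2", where 'k='k] assms(1) by simp
  hence "fst (snd (evalA wit (f2 m n :: 'k npoly))) = gmul (fst (snd (evalA wit ?F))) (gmonom (2 ^ (n div 2)) {1..n})"
    unfolding f2_eq[OF assms(2)] evalA_pmul[OF lcomm_x2_x1_freealg G] utmul_eq
    using evalA_wit_lcomm_x2_x1[of "m - n - 1", where 'k='k] by simp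
  thus ?thesis
    using evalA_wit_lcomm_x2_x1[of "m - n - 1", where 'k='k] by (simp add: gmul_gmonom_apply_self)
qed

lemma not_PI_of_Fn_if_notin_TA:
  assumes "f \<in> (freealg_n n :: 'k::field npoly set)" "f \<notin> TA"
  shows "\<not> PI_of_Fn n f"
proof
  define \<sigma> :: "nat \<Rightarrow> 'k npoly" where "\<sigma> i = (if 1 \<le> i \<and> i \<le> n then pvar i else pone)" for i
  assume "PI_of_Fn n f"
  moreover have "\<sigma> i \<in> freealg_n n" for i
    by (simp add: \<sigma>_def pvar_freealg_n pone_freealg_n)
  ultimately have "psubst \<sigma> f \<in> TA"
    by (simp add: PI_of_Fn_def)
  moreover have "psubst \<sigma> f = f"
    using assms(1) by (rule psubst_eq_self) (simp add: \<sigma>_def)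
  ultimately show False
    using assms(2) by simp
qed

theorem lemma3p6:
  fixes m n :: nat
  assumes "even n" and "n \<ge> 2" and "m \<ge> n + 2"
  shows "\<not> PI_of_Fn n (f2 m n :: 'k::field_char_0 npoly)"
proof (rule not_PI_of_Fn_if_notin_TA)
  show "f2 m n \<in> freealg_n n"
    using assms(2) by (rule f2_freealg_n)
  have "fst (snd (evalA wit (f2 m n :: 'k npoly))) {1..n} \<noteq> 0"
    using evalA_wit_f2[OF assms(1,2), where 'k='k] by simp
  hence "evalA wit (f2 m n :: 'k npoly) \<noteq> utzero"
    by (auto simp: utzero_def gzero_def)
  thus "(f2 m n :: 'k npoly) \<notin> TA"
    using wit_in_Acarrier unfolding TA_def by blast
qed

end
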